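(* Let $P$ be a basic program. (1) Every answer set by complement of $P$ is a minimal model of $P$. (2) If $P$ is naf-monotone, every answer set by reduct of $P$ is a minimal model of $P$. (3) Every answer set of $P$ (by complement or by reduct) supports each of its members; i.e., for every such answer set $M$ and every $a\in M$, $M$ supports $a$.
   Context: Fix a countable set $\mathcal{A}$ of atoms. A c-atom is $A=(A_d,A_c)$, $A_d\subseteq\mathcal{A}$, $A_c\subseteq 2^{A_d}$; $(\{p\},\{\{p\}\})$ is elementary; $\bot=(\mathcal{A},\emptyset)$; $A$ is monotone if $X\subseteq Y\subseteq A_d$, $X\in A_c$ imply $Y\in A_c$. Rule: $A\leftarrow A_1,\dots,A_k,\mathit{not}\,A_{k+1},\dots,\mathit{not}\,A_n$, $head(r)=A$, $pos(r)=\{A_1,..,A_k\}$, $neg(r)=\{A_{k+1},..,A_n\}$. Program = set of rules; positive if no naf-literals; basic if every head is elementary or $\bot$; naf-monotone if every c-atom in some $neg(r)$ is monotone. $S\models A$ iff $S\cap A_d\in A_c$; $S\models\mathit{not}\,A$ iff $S\cap A_d\notin A_c$; $S\models body(r)$ if it satisfies all body literals; a rule is satisfied if head satisfied or body not; model = satisfies all rules; minimal model = model with no proper subset a model. $S$ supports atom $a$ w.r.t. $P$ if some $r\in P$ and $X\in head(r)_c$ satisfy $S\models body(r)$, $X\subseteq S$, $a\in X$. Conditional satisfaction: $S\models_M A$ iff $S\models A$ and every $I$ with $S\cap A_d\subseteq I\subseteq M\cap A_d$ lies in $A_c$. For positive basic $P$: $T_P(S,M)=\{a\mid \exists r\in P,\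 head(r)=(\{a\},\{\{a\}\}),\ S\models_M B\ \forall B\in pos(r)\}$, $T^0_P(\emptyset,M)=\emptyset$, $T^{i+1}_P(\emptyset,M)=T_P(T^i_P(\emptyset,M),M)$, $T^\infty_P(\emptyset,M)=\bigcup_i T^i_P(\emptyset,M)$; a model $M$ is an answer set iff $M=T^\infty_P(\emptyset,M)$. Complement $\bar A=(A_d,2^{A_d}\setminus A_c)$; $\mathcal{C}(P)$ replaces each $\mathit{not}\,A$ by $\bar A$; answer set by complement = answer set of $\mathcal{C}(P)$. Reduct $P^M$: delete rules with some $\mathit{not}\,A$ in the body where $M\models A$, then delete remaining naf-literals; answer set by reduct = answer set of $P^M$. *)

theory Defs
  imports Main "HOL-Library.Countable"
begin

text \<open>Atoms are the elements of a countable type 'a; the atom set is UNIV.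
A c-atom is a pair (A_d, A_c).\<close>

type_synonym 'a catom = "'a set \<times> 'a set set"

definition wf_catom :: "'a catom \<Rightarrow> bool" where
  "wf_catom A \<longleftrightarrow> snd A \<subseteq> Pow (fst A)"

definition elem_catom :: "'a \<Rightarrow> 'a catom" where
  "elem_catom p = ({p}, {{p}})"

definition bot_catom :: "'a catom" where
  "bot_catom = (UNIV, {})"

definition monotone_catom :: "'a catom \<Rightarrow> bool" where
  "monotone_catom A \<longleftrightarrow> (\<forall>X Y. X \<subseteq> Y \<and> Y \<subseteq> fst A \<and> X \<in> snd A \<longrightarrow> Y \<in> snd A)"

datatype 'a rule = Rule (head: "'a catom") (pos: "'a catom list") (neg: "'a catom list")

type_synonym 'a program = "'a rule set"

definition wf_program :: "'a program \<Rightarrow> bool" where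
  "wf_program P \<longleftrightarrow> (\<forall>r\<in>P. wf_catom (head r) \<and> (\<forall>A\<in>set (pos r) \<union> set (neg r). wf_catom A))"

definition positive_prog :: "'a program \<Rightarrow> bool" where
  "positive_prog P \<longleftrightarrow> (\<forall>r\<in>P. neg r = [])"

definition basic_prog :: "'a program \<Rightarrow> bool" where
  "basic_prog P \<longleftrightarrow> (\<forall>r\<in>P. (\<exists>p. head r = elem_catom p) \<or> head r = bot_catom)"

definition naf_monotone :: "'a program \<Rightarrow> bool" where
  "naf_monotone P \<longleftrightarrow> (\<forall>r\<in>P. \<forall>A\<in>set (neg r). monotone_catom A)"

definition sat :: "'a set \<Rightarrow> 'a catom \<Rightarrow> bool" where
  "sat S A \<longleftrightarrow> S \<inter> fst A \<in> snd A"

definition sat_body :: "'a set \<Rightarrow> 'a rule \<Rightarrow> bool" where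
  "sat_body S r \<longleftrightarrow> (\<forall>A\<in>set (pos r). sat S A) \<and> (\<forall>A\<in>set (neg r). \<not> sat S A)"

definition sat_rule :: "'a set \<Rightarrow> 'a rule \<Rightarrow> bool" where
  "sat_rule S r \<longleftrightarrow> sat S (head r) \<or> \<not> sat_body S r"

definition is_model :: "'a program \<Rightarrow> 'a set \<Rightarrow> bool" where
  "is_model P S \<longleftrightarrow> (\<forall>r\<in>P. sat_rule S r)"

definition minimal_model :: "'a program \<Rightarrow> 'a set \<Rightarrow> bool" where
  "minimal_model P S \<longleftrightarrow> is_model P S \<and> (\<forall>S'. S' \<subset> S \<longrightarrow> \<not> is_model P S')"

definition supports :: "'a program \<Rightarrow> 'a set \<Rightarrow> 'a \<Rightarrow> bool" where
  "supports P S a \<longleftrightarrow> (\<exists>r\<in>P. \<exists>X\<in>snd (head r). sat_body S r \<and> X \<subseteq> S \<and> a \<in> X)"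

definition csat :: "'a set \<Rightarrow> 'a set \<Rightarrow> 'a catom \<Rightarrow> bool" where
  "csat S M A \<longleftrightarrow> sat S A \<and> (\<forall>I. S \<inter> fst A \<subseteq> I \<and> I \<subseteq> M \<inter> fst A \<longrightarrow> I \<in> snd A)"

definition TP :: "'a program \<Rightarrow> 'a set \<Rightarrow> 'a set \<Rightarrow> 'a set" where
  "TP P S M = {a. \<exists>r\<in>P. head r = elem_catom a \<and> (\<forall>B\<in>set (pos r). csat S M B)}"

primrec TP_iter :: "'a program \<Rightarrow> 'a set \<Rightarrow> nat \<Rightarrow> 'a set" where
  "TP_iter P M 0 = {}"
| "TP_iter P M (Suc n) = TP P (TP_iter P M n) M"

definition TP_inf :: "'a program \<Rightarrow> 'a set \<Rightarrow> 'a set" where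
  "TP_inf P M = (\<Union>n. TP_iter P M n)"

definition answer_set_pb :: "'a program \<Rightarrow> 'a set \<Rightarrow> bool" where
  "answer_set_pb P M \<longleftrightarrow> is_model P M \<and> M = TP_inf P M"

definition compl_catom :: "'a catom \<Rightarrow> 'a catom" where
  "compl_catom A = (fst A, Pow (fst A) - snd A)"

definition complement_prog :: "'a program \<Rightarrow> 'a program" where
  "complement_prog P = (\<lambda>r. Rule (head r) (pos r @ map compl_catom (neg r)) []) ` P"

definition reduct :: "'a program \<Rightarrow> 'a set \<Rightarrow> 'a program" where
  "reduct P M = (\<lambda>r. Rule (head r) (pos r) []) ` {r\<in>P. \<forall>A\<in>set (neg r). \<not> sat M A}"

definition answer_set_compl :: "'a program \<Rightarrow> 'a set \<Rightarrow> bool" where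
  "answer_set_compl P M \<longleftrightarrow> answer_set_pb (complement_prog P) M"

definition answer_set_reduct :: "'a program \<Rightarrow> 'a set \<Rightarrow> bool" where
  "answer_set_reduct P M \<longleftrightarrow> answer_set_pb (reduct P M) M"

end

theory Submission
  imports Defs
begin

text \<open>Both transformations turn \<open>P\<close> into a positive program, and an answer set \<open>M\<close> of a
positive program \<open>Q\<close> is a least model of \<open>Q\<close> among the subsets of \<open>M\<close>: by induction, every
stage of the iteration \<open>T\<^sup>i\<^sub>Q(\<emptyset>, M)\<close> lies in any such model, because conditional satisfaction
w.r.t. \<open>M\<close> is preserved by all sets between the current stage and \<open>M\<close>. Every atom of \<open>M\<close> is
produced at some stage, so it heads a rule whose body holds in \<open>M\<close>. It remains to move models
and support from the transformed program back to \<open>P\<close>: for the complement this is exact, and for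
the reduct the models of \<open>P\<close> below \<open>M\<close> stay models of \<open>P\<^sup>M\<close> when the negated c-atoms are
monotone.\<close>

lemma csat_imp_sat: "T \<subseteq> S \<Longrightarrow> S \<subseteq> M \<Longrightarrow> csat T M A \<Longrightarrow> sat S A"
  unfolding csat_def sat_def by (metis Int_mono order_refl)

lemma sat_elem_catom [simp]: "sat S (elem_catom a) \<longleftrightarrow> a \<in> S"
  by (auto simp: sat_def elem_catom_def)

lemma sat_body_positive: "neg r = [] \<Longrightarrow> sat_body S r \<longleftrightarrow> (\<forall>A\<in>set (pos r). sat S A)"
  by (simp add: sat_body_def)

lemma TP_subset_model:
  assumes "positive_prog Q" "is_model Q S" "T \<subseteq> S" "S \<subseteq> M"
  shows "TP Q T M \<subseteq> S"
proof
  fix a assume "a \<in> TP Q T M"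
  then obtain r where r: "r \<in> Q" "head r = elem_catom a" "\<forall>A\<in>set (pos r). csat T M A"
    by (auto simp: TP_def)
  have "\<forall>A\<in>set (pos r). sat S A"
    using r(3) assms(3,4) csat_imp_sat by blast
  with r(1) assms(1) have "sat_body S r"
    by (simp add: positive_prog_def sat_body_positive)
  with r assms(2) show "a \<in> S"
    by (auto simp: is_model_def sat_rule_def)
qed

lemma TP_iter_subset_model:
  assumes "positive_prog Q" "is_model Q S" "S \<subseteq> M"
  shows "TP_iter Q M n \<subseteq> S"
  by (induction n) (simp_all add: TP_subset_model[OF assms(1,2) _ assms(3)])

lemma answer_set_pb_minimal_model:
  assumes "positive_prog Q" "answer_set_pb Q M"
  shows "minimal_model Q M"
proof -
  have "M \<subseteq> S" if "S \<subseteq> M" "is_model Q S" for S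
  proof -
    have "TP_inf Q M \<subseteq> S"
      using TP_iter_subset_model[OF assms(1) that(2,1)] by (simp add: TP_inf_def UN_least)
    with assms(2) show ?thesis
      by (simp add: answer_set_pb_def)
  qed
  with assms(2) show ?thesis
    by (auto simp: minimal_model_def answer_set_pb_def)
qed

lemma answer_set_pb_supports:
  assumes "positive_prog Q" "answer_set_pb Q M" "a \<in> M"
  shows "supports Q M a"
proof -
  have M: "M = TP_inf Q M"
    using assms(2) by (simp add: answer_set_pb_def)
  then obtain n where "a \<in> TP_iter Q M (Suc n)"
    using assms(3) by (metis TP_inf_def UN_E TP_iter.simps(1) empty_iff not0_implies_Suc)
  then obtain r where r: "r \<in> Q" "head r = elem_catom a"
      "\<forall>A\<in>set (pos r). csat (TP_iter Q M n) M A"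
    by (auto simp: TP_def)
  have "TP_iter Q M n \<subseteq> M"
    using M by (auto simp: TP_inf_def)
  with r(3) have "\<forall>A\<in>set (pos r). sat M A"
    using csat_imp_sat by blast
  with r(1) assms(1) have "sat_body M r"
    by (simp add: positive_prog_def sat_body_positive)
  with r assms(3) show ?thesis
    unfolding supports_def by (auto simp: elem_catom_def)
qed

lemma positive_complement_prog: "positive_prog (complement_prog P)"
  by (auto simp: positive_prog_def complement_prog_def)

lemma sat_compl_catom [simp]: "sat S (compl_catom A) \<longleftrightarrow> \<not> sat S A"
  by (auto simp: sat_def compl_catom_def)

lemma sat_body_complement_rule:
  "sat_body S (Rule (head r) (pos r @ map compl_catom (neg r)) []) \<longleftrightarrow> sat_body S r"
  by (simp add: sat_body_def ball_Un)

lemma is_model_complement_prog: "is_model (complement_prog P) S \<longleftrightarrow> is_model P S"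
  by (simp add: is_model_def complement_prog_def sat_rule_def sat_body_complement_rule)

lemma minimal_model_complement_prog:
  "minimal_model (complement_prog P) S \<longleftrightarrow> minimal_model P S"
  by (simp add: minimal_model_def is_model_complement_prog)

lemma supports_complement_prog: "supports (complement_prog P) S a \<longleftrightarrow> supports P S a"
  by (simp add: supports_def complement_prog_def sat_body_complement_rule)

lemma answer_set_compl_minimal_model: "answer_set_compl P M \<Longrightarrow> minimal_model P M"
  using answer_set_pb_minimal_model[OF positive_complement_prog]
  by (simp add: answer_set_compl_def minimal_model_complement_prog)

lemma answer_set_compl_supports: "answer_set_compl P M \<Longrightarrow> a \<in> M \<Longrightarrow> supports P M a"
  using answer_set_pb_supports[OF positive_complement_prog]
  by (simp add: answer_set_compl_def supports_complement_prog)

lemma positive_reduct: "positive_prog (reduct P M)"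
  by (auto simp: positive_prog_def reduct_def)

lemma sat_body_reduct_rule:
  "\<forall>A\<in>set (neg r). \<not> sat S A \<Longrightarrow> sat_body S (Rule (head r) (pos r) []) \<longleftrightarrow> sat_body S r"
  by (simp add: sat_body_def)

lemma is_model_reduct_self: "is_model (reduct P M) M \<longleftrightarrow> is_model P M"
  by (auto simp: is_model_def reduct_def sat_rule_def sat_body_def)

lemma supports_reduct_self: "supports (reduct P M) M a \<longleftrightarrow> supports P M a"
  by (auto simp: supports_def reduct_def sat_body_def)

lemma not_sat_monotone_catom:
  "monotone_catom A \<Longrightarrow> S \<subseteq> M \<Longrightarrow> \<not> sat M A \<Longrightarrow> \<not> sat S A"
  unfolding monotone_catom_def sat_def by (meson Int_mono Int_lower2 order_refl)

lemma is_model_reduct_below: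
  assumes "naf_monotone P" "S \<subseteq> M" "is_model P S"
  shows "is_model (reduct P M) S"
  unfolding is_model_def
proof
  fix r' assume "r' \<in> reduct P M"
  then obtain r where r: "r \<in> P" "\<forall>A\<in>set (neg r). \<not> sat M A"
      and r': "r' = Rule (head r) (pos r) []"
    by (auto simp: reduct_def)
  have "\<forall>A\<in>set (neg r). \<not> sat S A"
    using r assms(1,2) not_sat_monotone_catom by (fastforce simp: naf_monotone_def)
  with r r' assms(3) show "sat_rule S r'"
    by (auto simp: is_model_def sat_rule_def sat_body_reduct_rule)
qed

lemma answer_set_reduct_minimal_model:
  assumes "naf_monotone P" "answer_set_reduct P M"
  shows "minimal_model P M"
proof -
  have "minimal_model (reduct P M) M"
    using assms(2) answer_set_pb_minimal_model[OF positive_reduct]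
    by (simp add: answer_set_reduct_def)
  then have "is_model P M" "\<And>S. S \<subset> M \<Longrightarrow> \<not> is_model (reduct P M) S"
    by (simp_all add: minimal_model_def is_model_reduct_self)
  with assms(1) show ?thesis
    unfolding minimal_model_def by (blast intro: is_model_reduct_below)
qed

lemma answer_set_reduct_supports: "answer_set_reduct P M \<Longrightarrow> a \<in> M \<Longrightarrow> supports P M a"
  using answer_set_pb_supports[OF positive_reduct, of P M M a]
  by (simp add: answer_set_reduct_def supports_reduct_self)

theorem proposition4:
  fixes P :: "('a::countable) program"
  assumes "wf_program P" and "basic_prog P"
  shows "(\<forall>M. answer_set_compl P M \<longrightarrow> minimal_model P M)
    \<and> (naf_monotone P \<longrightarrow> (\<forall>M. answer_set_reduct P M \<longrightarrow> minimal_model P M))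
    \<and> (\<forall>M. (answer_set_compl P M \<or> answer_set_reduct P M) \<longrightarrow> (\<forall>a\<in>M. supports P M a))"
  by (auto intro: answer_set_compl_minimal_model answer_set_reduct_minimal_model
      answer_set_compl_supports answer_set_reduct_supports)

end
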